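(* Let $(K,d_K)$ be an acyclic graded-commutative dg-algebra and let $(A,d_A)$ be a dg-algebra over $(K,d_K)$. Then the map $\alpha:\ker(d_A)\otimes_{\ker(d_K)}K\to A$, $a\otimes x\mapsto ax$, is an isomorphism of dg-algebras, where $\ker(d_A)\otimes_{\ker(d_K)}K$ carries the differential $a\otimes x\mapsto(-1)^{|a|}a\otimes d_K(x)$.
   Context: Dg-algebra: $\mathbb Z$-graded algebra with degree-$1$ map $d$, $d^2=0$, $d(ab)=d(a)b+(-1)^{|a|}a\,d(b)$. Acyclic means the cohomology $H(K,d_K)=\ker(d_K)/\mathrm{im}(d_K)$ vanishes. Graded-commutative: $xy=(-1)^{|x||y|}yx$ for homogeneous $x,y$. Graded centre $Z_{gr}(A)$: spanned by homogeneous $z$ with $za=(-1)^{|z||a|}az$. A dg-algebra over $(K,d_K)$ is a dg-algebra $(A,d_A)$ with a degree-$0$ graded ring homomorphism $K\to Z_{gr}(A)$ commuting with differentials. The tensor product algebra uses $(a\otimes x)(b\otimes y)=(-1)^{|x||b|}ab\otimes xy$. *)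

theory Defs
  imports Main "HOL-Library.Poly_Mapping"
begin

definition gsign :: "int \<Rightarrow> 'a::ring_1" where
  "gsign n = (if even n then 1 else - 1)"

(* A Z-grading of a ring 'a: gr n is the homogeneous component of degree n;
   'a is the internal direct sum of the gr n and gr m * gr n \<subseteq> gr (m+n). *)
definition graded :: "(int \<Rightarrow> 'a::ring_1 set) \<Rightarrow> bool" where
  "graded gr \<longleftrightarrow>
     (\<forall>n. 0 \<in> gr n \<and> (\<forall>x\<in>gr n. \<forall>y\<in>gr n. x + y \<in> gr n) \<and> (\<forall>x\<in>gr n. - x \<in> gr n)) \<and>
     (\<forall>m n x y. x \<in> gr m \<longrightarrow> y \<in> gr n \<longrightarrow> x * y \<in> gr (m + n)) \<and>
     1 \<in> gr 0 \<and>
     (\<forall>x. \<exists>!f. finite {n. f n \<noteq> 0} \<and> (\<forall>n. f n \<in> gr n) \<and> x = (\<Sum>n | f n \<noteq> 0. f n))"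

definition comp :: "(int \<Rightarrow> 'a::ring_1 set) \<Rightarrow> int \<Rightarrow> 'a \<Rightarrow> 'a" where
  "comp gr n x = (THE f. finite {n. f n \<noteq> 0} \<and> (\<forall>n. f n \<in> gr n) \<and> x = (\<Sum>n | f n \<noteq> 0. f n)) n"

definition degs :: "(int \<Rightarrow> 'a::ring_1 set) \<Rightarrow> 'a \<Rightarrow> int set" where
  "degs gr x = {n. comp gr n x \<noteq> 0}"

definition dg_algebra :: "(int \<Rightarrow> 'a::ring_1 set) \<Rightarrow> ('a \<Rightarrow> 'a) \<Rightarrow> bool" where
  "dg_algebra gr d \<longleftrightarrow> graded gr \<and>
     (\<forall>x y. d (x + y) = d x + d y) \<and>
     (\<forall>n x. x \<in> gr n \<longrightarrow> d x \<in> gr (n + 1)) \<and>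
     (\<forall>x. d (d x) = 0) \<and>
     (\<forall>n a b. a \<in> gr n \<longrightarrow> d (a * b) = d a * b + gsign n * (a * d b))"

definition acyclic :: "('a::ring_1 \<Rightarrow> 'a) \<Rightarrow> bool" where
  "acyclic d \<longleftrightarrow> (\<forall>x. d x = 0 \<longrightarrow> (\<exists>y. x = d y))"

definition graded_commutative :: "(int \<Rightarrow> 'a::ring_1 set) \<Rightarrow> bool" where
  "graded_commutative gr \<longleftrightarrow>
     (\<forall>m n x y. x \<in> gr m \<longrightarrow> y \<in> gr n \<longrightarrow> x * y = gsign (m * n) * (y * x))"

inductive_set gr_centre :: "(int \<Rightarrow> 'a::ring_1 set) \<Rightarrow> 'a set" for gr where
  zero: "0 \<in> gr_centre gr"
| gen: "z \<in> gr n \<Longrightarrow> (\<And>m a. a \<in> gr m \<Longrightarrow> z * a = gsign (n * m) * (a * z)) \<Longrightarrow> z \<in> gr_centre gr"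
| add: "z \<in> gr_centre gr \<Longrightarrow> w \<in> gr_centre gr \<Longrightarrow> z + w \<in> gr_centre gr"

definition dg_algebra_over ::
  "(int \<Rightarrow> 'k::ring_1 set) \<Rightarrow> ('k \<Rightarrow> 'k) \<Rightarrow> (int \<Rightarrow> 'a::ring_1 set) \<Rightarrow> ('a \<Rightarrow> 'a) \<Rightarrow> ('k \<Rightarrow> 'a) \<Rightarrow> bool" where
  "dg_algebra_over grK dK grA dA phi \<longleftrightarrow> dg_algebra grK dK \<and> dg_algebra grA dA \<and>
     (\<forall>x y. phi (x + y) = phi x + phi y) \<and> (\<forall>x y. phi (x * y) = phi x * phi y) \<and> phi 1 = 1 \<and>
     (\<forall>n x. x \<in> grK n \<longrightarrow> phi x \<in> grA n) \<and>
     (\<forall>x. phi x \<in> gr_centre grA) \<and>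
     (\<forall>x. phi (dK x) = dA (phi x))"

(* Tensor product ker(dA) \<otimes>_{ker(dK)} K, realised as the free abelian group on pairs
   (a,x) with a \<in> ker dA, x \<in> K (type ('a \<times> 'k) \<Rightarrow>\<^sub>0 int, domain tens_dom) modulo the
   subgroup tens_rel generated by the bilinearity and balancing relations.
   ker dA is a right ker(dK)-module via a\<cdot>r = a * phi r, K a left one by multiplication. *)
definition tens_dom :: "('a::ring_1 \<Rightarrow> 'a) \<Rightarrow> (('a \<times> 'k) \<Rightarrow>\<^sub>0 int) set" where
  "tens_dom dA = {t. Poly_Mapping.keys t \<subseteq> {a. dA a = 0} \<times> UNIV}"

inductive_set tens_rel ::
  "('k::ring_1 \<Rightarrow> 'k) \<Rightarrow> ('a::ring_1 \<Rightarrow> 'a) \<Rightarrow> ('k \<Rightarrow> 'a) \<Rightarrow> (('a \<times> 'k) \<Rightarrow>\<^sub>0 int) set"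
  for dK dA phi where
  add_left: "dA a = 0 \<Longrightarrow> dA a' = 0 \<Longrightarrow>
     frag_of (a + a', x) - frag_of (a, x) - frag_of (a', x) \<in> tens_rel dK dA phi"
| add_right: "dA a = 0 \<Longrightarrow>
     frag_of (a, x + x') - frag_of (a, x) - frag_of (a, x') \<in> tens_rel dK dA phi"
| balanced: "dA a = 0 \<Longrightarrow> dK r = 0 \<Longrightarrow>
     frag_of (a * phi r, x) - frag_of (a, r * x) \<in> tens_rel dK dA phi"
| zero: "0 \<in> tens_rel dK dA phi"
| diff: "t \<in> tens_rel dK dA phi \<Longrightarrow> s \<in> tens_rel dK dA phi \<Longrightarrow> t - s \<in> tens_rel dK dA phi"

definition tens_alpha :: "('k \<Rightarrow> 'a::ring_1) \<Rightarrow> (('a \<times> 'k) \<Rightarrow>\<^sub>0 int) \<Rightarrow> 'a" where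
  "tens_alpha phi t = (\<Sum>p\<in>Poly_Mapping.keys t. of_int (Poly_Mapping.lookup t p) * (fst p * phi (snd p)))"

(* differential on the tensor product: a \<otimes> x \<mapsto> (-1)^|a| a \<otimes> dK x (for homogeneous a),
   extended additively *)
definition tens_diff ::
  "(int \<Rightarrow> 'a::ring_1 set) \<Rightarrow> ('k \<Rightarrow> 'k) \<Rightarrow> (('a \<times> 'k) \<Rightarrow>\<^sub>0 int) \<Rightarrow> (('a \<times> 'k) \<Rightarrow>\<^sub>0 int)" where
  "tens_diff grA dK t = frag_extend (\<lambda>p.
      \<Sum>n\<in>degs grA (fst p). frag_cmul (gsign n) (frag_of (comp grA n (fst p), dK (snd p)))) t"

(* product on the tensor product: (a \<otimes> x)(b \<otimes> y) = (-1)^(|x||b|) ab \<otimes> xy (homogeneous x, b),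
   extended biadditively *)
definition tens_mult ::
  "(int \<Rightarrow> 'k::ring_1 set) \<Rightarrow> (int \<Rightarrow> 'a::ring_1 set) \<Rightarrow>
   (('a \<times> 'k) \<Rightarrow>\<^sub>0 int) \<Rightarrow> (('a \<times> 'k) \<Rightarrow>\<^sub>0 int) \<Rightarrow> (('a \<times> 'k) \<Rightarrow>\<^sub>0 int)" where
  "tens_mult grK grA t s = frag_extend (\<lambda>p. frag_extend (\<lambda>q.
      \<Sum>i\<in>degs grK (snd p). \<Sum>j\<in>degs grA (fst q).
        frag_cmul (gsign (i * j)) (frag_of (fst p * comp grA j (fst q), comp grK i (snd p) * snd q))) s) t"

definition tens_one :: "('a::ring_1 \<times> 'k::ring_1) \<Rightarrow>\<^sub>0 int" where
  "tens_one = frag_of (1, 1)"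

definition tens_gr ::
  "(int \<Rightarrow> 'k::ring_1 set) \<Rightarrow> (int \<Rightarrow> 'a::ring_1 set) \<Rightarrow> ('a \<Rightarrow> 'a) \<Rightarrow> int \<Rightarrow> (('a \<times> 'k) \<Rightarrow>\<^sub>0 int) set" where
  "tens_gr grK grA dA n =
     {t. Poly_Mapping.keys t \<subseteq> {(a, x). dA a = 0 \<and> (\<exists>p. a \<in> grA p \<and> x \<in> grK (n - p))}}"

end

theory Submission
  imports Defs
begin

text \<open>Acyclicity of \<open>K\<close> yields \<open>h \<in> K\<^sup>-\<^sup>1\<close> with \<open>d h = 1\<close>. By the Leibniz rule and graded
  commutativity every homogeneous \<open>x \<in> K\<close> splits as \<open>x = d(hx) \<plusminus> d(x) h\<close> with cycle
  coefficients, so modulo the tensor relations every element of \<open>ker(d\<^sub>A) \<otimes> K\<close> has the form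
  \<open>b \<otimes> 1 + c \<otimes> h\<close> with cycles \<open>b, c\<close>. Its image is \<open>b + c e\<close>, where \<open>e = \<phi>(h)\<close> satisfies
  \<open>d e = 1\<close>. If the image vanishes, \<open>c e = -b\<close> is a cycle; but for a cycle \<open>c\<close> the Leibniz rule
  gives \<open>d(c e) = \<Sum>\<^sub>n \<plusminus>c\<^sub>n\<close>, so \<open>c = 0\<close> and then \<open>b = 0\<close>. Surjectivity comes from the same
  identity: \<open>a = \<Sum>\<^sub>n \<plusminus>(d(a\<^sub>n e) - d(a\<^sub>n) e)\<close> for the homogeneous components \<open>a\<^sub>n\<close> of \<open>a\<close>.\<close>

section \<open>Graded rings\<close>

lemma
  assumes "graded gr"
  shows graded_zero: "0 \<in> gr n"
    and graded_add: "x \<in> gr n \<Longrightarrow> y \<in> gr n \<Longrightarrow> x + y \<in> gr n"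
    and graded_uminus: "x \<in> gr n \<Longrightarrow> - x \<in> gr n"
    and graded_mult: "x \<in> gr m \<Longrightarrow> y \<in> gr k \<Longrightarrow> x * y \<in> gr (m + k)"
    and graded_one: "1 \<in> gr 0"
proof -
  note g = assms[unfolded graded_def]
  have additive: "\<forall>n. 0 \<in> gr n \<and> (\<forall>x\<in>gr n. \<forall>y\<in>gr n. x + y \<in> gr n) \<and> (\<forall>x\<in>gr n. - x \<in> gr n)"
    using g by (rule conjunct1)
  have multiplicative: "\<forall>m n x y. x \<in> gr m \<longrightarrow> y \<in> gr n \<longrightarrow> x * y \<in> gr (m + n)"
    using g by (rule conjunct1[OF conjunct2])
  show "1 \<in> gr 0" using g by (rule conjunct1[OF conjunct2[OF conjunct2]])
  show "0 \<in> gr n" "x \<in> gr n \<Longrightarrow> y \<in> gr n \<Longrightarrow> x + y \<in> gr n" "x \<in> gr n \<Longrightarrow> - x \<in> gr n"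
    using additive by blast+
  show "x \<in> gr m \<Longrightarrow> y \<in> gr k \<Longrightarrow> x * y \<in> gr (m + k)" using multiplicative by blast
qed

lemma graded_decomposition_ex1:
  "graded gr \<Longrightarrow> \<exists>!f. finite {n. f n \<noteq> 0} \<and> (\<forall>n. f n \<in> gr n) \<and> x = (\<Sum>n | f n \<noteq> 0. f n)"
  unfolding graded_def by (drule conjunct2[OF conjunct2[OF conjunct2]]) (erule spec)

lemma
  assumes "graded gr"
  shows finite_degs: "finite (degs gr x)"
    and comp_in_graded: "comp gr n x \<in> gr n"
    and sum_comp: "(\<Sum>n\<in>degs gr x. comp gr n x) = x"
proof -
  let ?P = "\<lambda>f. finite {n. f n \<noteq> 0} \<and> (\<forall>n. f n \<in> gr n) \<and> x = (\<Sum>n | f n \<noteq> 0. f n)"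
  have P: "?P (\<lambda>n. comp gr n x)"
    unfolding comp_def using theI'[OF graded_decomposition_ex1[OF assms]] .
  then show "finite (degs gr x)" "comp gr n x \<in> gr n" "(\<Sum>n\<in>degs gr x. comp gr n x) = x"
    unfolding degs_def by auto
qed

lemma comp_eqI:
  assumes "graded gr" "finite S" "\<And>n. f n \<in> gr n" "\<And>n. n \<notin> S \<Longrightarrow> f n = 0" "x = (\<Sum>n\<in>S. f n)"
  shows "comp gr n x = f n"
proof -
  let ?P = "\<lambda>f. finite {n. f n \<noteq> 0} \<and> (\<forall>n. f n \<in> gr n) \<and> x = (\<Sum>n | f n \<noteq> 0. f n)"
  have sub: "{n. f n \<noteq> 0} \<subseteq> S" using assms(4) by blast
  have "?P f"
  proof (intro conjI)
    show "finite {n. f n \<noteq> 0}" using finite_subset[OF sub assms(2)] .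
    show "\<forall>n. f n \<in> gr n" using assms(3) by blast
    show "x = (\<Sum>n | f n \<noteq> 0. f n)" unfolding assms(5)
      by (rule sum.mono_neutral_right[OF assms(2) sub]) blast
  qed
  then have "(THE f. ?P f) = f" by (rule the1_equality[OF graded_decomposition_ex1[OF assms(1)]])
  then show ?thesis unfolding comp_def by simp
qed

lemma comp_homogeneous:
  assumes "graded gr" "x \<in> gr m"
  shows "comp gr n x = (if n = m then x else 0)"
  by (rule comp_eqI[OF assms(1), of "{m}"]) (use assms graded_zero[OF assms(1)] in auto)

lemma comp_zero: "graded gr \<Longrightarrow> comp gr n 0 = 0"
  using comp_homogeneous[of gr 0 0 n] graded_zero by auto

lemma sum_comp_superset:
  assumes "graded gr" "finite S" "degs gr x \<subseteq> S"
  shows "(\<Sum>n\<in>S. comp gr n x) = x"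
proof -
  have "(\<Sum>n\<in>S. comp gr n x) = (\<Sum>n\<in>degs gr x. comp gr n x)"
    by (rule sum.mono_neutral_right[OF assms(2,3)]) (auto simp: degs_def)
  then show ?thesis using sum_comp[OF assms(1)] by simp
qed

lemma comp_add:
  assumes "graded gr"
  shows "comp gr n (x + y) = comp gr n x + comp gr n y"
proof (rule comp_eqI[OF assms, of "degs gr x \<union> degs gr y"])
  let ?S = "degs gr x \<union> degs gr y"
  show "finite ?S" using finite_degs[OF assms] by auto
  show "comp gr k x + comp gr k y \<in> gr k" for k
    using comp_in_graded[OF assms] graded_add[OF assms] by blast
  show "k \<notin> ?S \<Longrightarrow> comp gr k x + comp gr k y = 0" for k by (auto simp: degs_def)
  show "x + y = (\<Sum>n\<in>?S. comp gr n x + comp gr n y)"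
    by (simp add: sum.distrib sum_comp_superset[OF assms] finite_degs[OF assms])
qed

lemma sum_in_graded:
  assumes "graded gr" "\<And>i. i \<in> S \<Longrightarrow> f i \<in> gr n"
  shows "(\<Sum>i\<in>S. f i) \<in> gr n"
  using assms(2)
  by (induction S rule: infinite_finite_induct) (auto intro: graded_zero graded_add assms(1))

lemma of_int_mult_in_graded:
  assumes "graded gr" "x \<in> gr m"
  shows "of_int k * x \<in> gr m"
proof -
  have nat: "of_nat j * x \<in> gr m" for j
    by (induction j) (auto simp: distrib_right intro: graded_zero graded_add assms)
  show ?thesis
  proof (cases "k \<ge> 0")
    case True
    then show ?thesis using nat[of "nat k"] by simp
  next
    case False
    then have "of_int k * x = - (of_nat (nat (- k)) * x)" by simp
    then show ?thesis using graded_uminus[OF assms(1) nat] by simp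
  qed
qed

lemma gsign_minus_one [simp]: "gsign (-1) = (-1::'a::ring_1)"
  unfolding gsign_def by auto

lemma gsign_uminus: "gsign (- n) = gsign n"
  unfolding gsign_def by simp

lemma of_int_gsign [simp]: "of_int (gsign n) = gsign n"
  unfolding gsign_def by auto

lemma gsign_mult_cancel [simp]: "gsign k * (gsign k * x) = (x::'a::ring_1)"
  unfolding gsign_def by simp

lemma gsign_commute: "gsign k * x = x * (gsign k :: 'a::ring_1)"
  unfolding gsign_def by simp

lemma gsign_mult_in_graded: "graded gr \<Longrightarrow> x \<in> gr m \<Longrightarrow> gsign k * x \<in> gr m"
  unfolding gsign_def using graded_uminus by auto

lemma gr_centre_commute_comp:
  assumes "graded gr" "z \<in> gr_centre gr" "b \<in> gr j"
  shows "comp gr m z * b = gsign (m * j) * (b * comp gr m z)"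
  using assms(2,3)
proof (induction arbitrary: m rule: gr_centre.induct)
  case zero
  then show ?case by (simp add: comp_zero[OF assms(1)])
next
  case (gen z n)
  then show ?case by (simp add: comp_homogeneous[OF assms(1)])
next
  case (add z w)
  then show ?case by (simp add: comp_add[OF assms(1)] distrib_left distrib_right)
qed

lemma gr_centre_commute:
  assumes "graded gr" "z \<in> gr_centre gr" "z \<in> gr i" "b \<in> gr j"
  shows "z * b = gsign (i * j) * (b * z)"
  using gr_centre_commute_comp[OF assms(1,2,4), of i] comp_homogeneous[OF assms(1,3), of i] by simp

section \<open>Dg-algebras\<close>

lemma
  assumes "dg_algebra gr d"
  shows dg_graded: "graded gr"
    and dg_add: "d (x + y) = d x + d y"
    and dg_degree: "x \<in> gr n \<Longrightarrow> d x \<in> gr (n + 1)"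
    and dg_dd [simp]: "d (d x) = 0"
    and dg_Leibniz: "a \<in> gr n \<Longrightarrow> d (a * b) = d a * b + gsign n * (a * d b)"
  using assms unfolding dg_algebra_def by blast+

lemma dg_zero: "dg_algebra gr d \<Longrightarrow> d 0 = 0"
  using dg_add[of gr d 0 0] by simp

lemma dg_uminus: "dg_algebra gr d \<Longrightarrow> d (- x) = - d x"
  using dg_add[of gr d x "- x"] dg_zero[of gr d] by (simp add: minus_unique)

lemma dg_diff: "dg_algebra gr d \<Longrightarrow> d (x - y) = d x - d y"
  using dg_add[of gr d x "- y"] dg_uminus[of gr d y] by simp

lemma dg_sum: "dg_algebra gr d \<Longrightarrow> d (\<Sum>i\<in>S. f i) = (\<Sum>i\<in>S. d (f i))"
  by (induction S rule: infinite_finite_induct) (auto simp: dg_zero dg_add)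

lemma dg_of_int_mult:
  assumes "dg_algebra gr d"
  shows "d (of_int k * x) = of_int k * d x"
proof -
  have nat: "d (of_nat j * x) = of_nat j * d x" for j
    by (induction j) (auto simp: distrib_right dg_add[OF assms] dg_zero[OF assms])
  show ?thesis
  proof (cases "k \<ge> 0")
    case True
    then show ?thesis using nat[of "nat k"] by simp
  next
    case False
    then have "of_int k * x = - (of_nat (nat (- k)) * x)" "of_int k * d x = - (of_nat (nat (- k)) * d x)"
      by simp_all
    then show ?thesis using nat dg_uminus[OF assms] by simp
  qed
qed

lemma dg_gsign_mult: "dg_algebra gr d \<Longrightarrow> d (gsign k * x) = gsign k * d x"
  unfolding gsign_def using dg_uminus[of gr d x] by simp

lemma dg_one:
  assumes "dg_algebra gr d"
  shows "d 1 = 0"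
  using dg_Leibniz[OF assms graded_one[OF dg_graded[OF assms]], of 1] by (simp add: gsign_def)

lemma comp_dg:
  assumes "dg_algebra gr d"
  shows "comp gr m (d x) = d (comp gr (m - 1) x)"
proof (rule comp_eqI[OF dg_graded[OF assms], of "(\<lambda>n. n + 1) ` degs gr x"])
  note G = dg_graded[OF assms]
  show "finite ((\<lambda>n. n + 1) ` degs gr x)" using finite_degs[OF G] by simp
  show "d (comp gr (k - 1) x) \<in> gr k" for k
    using dg_degree[OF assms comp_in_graded[OF G, of "k - 1" x]] by simp
  show "d (comp gr (k - 1) x) = 0" if "k \<notin> (\<lambda>n. n + 1) ` degs gr x" for k
  proof -
    from that have "k - 1 \<notin> degs gr x" by (metis diff_add_cancel image_eqI)
    then show ?thesis by (simp add: degs_def dg_zero[OF assms])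
  qed
  have "d x = (\<Sum>n\<in>degs gr x. d (comp gr n x))"
    using dg_sum[OF assms] sum_comp[OF G, of x] by metis
  also have "\<dots> = (\<Sum>k\<in>(\<lambda>n. n + 1) ` degs gr x. d (comp gr (k - 1) x))"
    by (subst sum.reindex) (auto simp: inj_on_def)
  finally show "d x = (\<Sum>k\<in>(\<lambda>n. n + 1) ` degs gr x. d (comp gr (k - 1) x))" .
qed

lemma cycle_comp:
  assumes "dg_algebra gr d" "d x = 0"
  shows "d (comp gr n x) = 0"
  using comp_dg[OF assms(1), of "n + 1" x] assms(2) comp_zero[OF dg_graded[OF assms(1)]] by simp

lemma dg_mult_by_comp:
  assumes "dg_algebra gr d"
  shows "d (a * b) = (\<Sum>n\<in>degs gr a. d (comp gr n a) * b + gsign n * (comp gr n a * d b))"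
proof -
  note G = dg_graded[OF assms]
  have "d (a * b) = d (\<Sum>n\<in>degs gr a. comp gr n a * b)"
    by (simp add: sum_comp[OF G] flip: sum_distrib_right)
  also have "\<dots> = (\<Sum>n\<in>degs gr a. d (comp gr n a * b))" by (rule dg_sum[OF assms])
  also have "\<dots> = (\<Sum>n\<in>degs gr a. d (comp gr n a) * b + gsign n * (comp gr n a * d b))"
    by (rule sum.cong) (auto intro: dg_Leibniz[OF assms comp_in_graded[OF G]])
  finally show ?thesis .
qed

lemma cycle_mult:
  assumes "dg_algebra gr d" "d a = 0" "d b = 0"
  shows "d (a * b) = 0"
  using dg_mult_by_comp[OF assms(1), of a b] cycle_comp[OF assms(1,2)] assms(3) by simp

lemma acyclic_ex_contraction:
  assumes "dg_algebra gr d" "acyclic d"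
  shows "\<exists>h. h \<in> gr (-1) \<and> d h = 1"
proof -
  note G = dg_graded[OF assms(1)]
  obtain y where y: "1 = d y" using assms(2) dg_one[OF assms(1)] unfolding acyclic_def by blast
  have "comp gr 0 (1::'a) = 1" using comp_homogeneous[OF G graded_one[OF G]] by simp
  then have "d (comp gr (-1) y) = 1" using comp_dg[OF assms(1), of 0 y] y by simp
  then show ?thesis using comp_in_graded[OF G] by blast
qed

section \<open>Integer combinations evaluated in a ring\<close>

definition frag_eval :: "('b \<Rightarrow> 'a::ring_1) \<Rightarrow> ('b \<Rightarrow>\<^sub>0 int) \<Rightarrow> 'a" where
  "frag_eval w t = (\<Sum>p\<in>Poly_Mapping.keys t. of_int (Poly_Mapping.lookup t p) * w p)"

lemma tens_alpha_eq_frag_eval: "tens_alpha phi = frag_eval (\<lambda>p. fst p * phi (snd p))"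
  by (rule ext) (simp add: tens_alpha_def frag_eval_def)

lemma frag_eval_superset:
  assumes "finite S" "Poly_Mapping.keys t \<subseteq> S"
  shows "frag_eval w t = (\<Sum>p\<in>S. of_int (Poly_Mapping.lookup t p) * w p)"
  unfolding frag_eval_def by (rule sum.mono_neutral_left[OF assms]) (auto simp: in_keys_iff)

lemma frag_eval_zero [simp]: "frag_eval w 0 = 0"
  by (simp add: frag_eval_def)

lemma frag_eval_of [simp]: "frag_eval w (frag_of p) = w p"
  by (simp add: frag_eval_def)

lemma frag_eval_add [simp]: "frag_eval w (s + t) = frag_eval w s + frag_eval w t"
proof -
  let ?S = "Poly_Mapping.keys s \<union> Poly_Mapping.keys t"
  have S: "finite ?S" by simp
  have "frag_eval w (s + t) = (\<Sum>p\<in>?S. of_int (Poly_Mapping.lookup (s + t) p) * w p)"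
    by (rule frag_eval_superset[OF S]) (simp add: keys_add)
  also have "\<dots> = (\<Sum>p\<in>?S. of_int (Poly_Mapping.lookup s p) * w p)
                 + (\<Sum>p\<in>?S. of_int (Poly_Mapping.lookup t p) * w p)"
    by (simp add: lookup_add distrib_right sum.distrib)
  also have "\<dots> = frag_eval w s + frag_eval w t"
    by (simp add: frag_eval_superset[OF S])
  finally show ?thesis .
qed

lemma frag_eval_uminus [simp]: "frag_eval w (- t) = - frag_eval w t"
  by (metis add.right_inverse add_eq_0_iff frag_eval_add frag_eval_zero)

lemma frag_eval_diff [simp]: "frag_eval w (s - t) = frag_eval w s - frag_eval w t"
  by (metis diff_conv_add_uminus frag_eval_add frag_eval_uminus)

lemma frag_eval_cmul [simp]: "frag_eval w (frag_cmul c t) = of_int c * frag_eval w t"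
proof -
  have "frag_eval w (frag_cmul c t)
      = (\<Sum>p\<in>Poly_Mapping.keys t. of_int (Poly_Mapping.lookup (frag_cmul c t) p) * w p)"
    by (rule frag_eval_superset) (auto simp: keys_cmul)
  also have "\<dots> = of_int c * frag_eval w t"
    by (simp add: frag_eval_def sum_distrib_left mult.assoc)
  finally show ?thesis .
qed

lemma frag_eval_sum [simp]: "frag_eval w (\<Sum>i\<in>S. f i) = (\<Sum>i\<in>S. frag_eval w (f i))"
  by (induction S rule: infinite_finite_induct) auto

lemma frag_eval_cong:
  "(\<And>p. p \<in> Poly_Mapping.keys t \<Longrightarrow> w p = w' p) \<Longrightarrow> frag_eval w t = frag_eval w' t"
  unfolding frag_eval_def by (rule sum.cong) auto

lemma frag_eval_extend: "frag_eval w (frag_extend f t) = frag_eval (\<lambda>p. frag_eval w (f p)) t"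
  unfolding frag_extend_def frag_eval_sum frag_eval_cmul frag_eval_def[of "\<lambda>p. frag_eval w (f p)" t] ..

lemma frag_eval_mult_left: "frag_eval (\<lambda>p. c * w p) t = c * frag_eval w t"
  unfolding frag_eval_def sum_distrib_left
  by (rule sum.cong) (auto simp: mult_of_int_commute mult.assoc)

lemma frag_eval_mult_right: "frag_eval (\<lambda>p. w p * c) t = frag_eval w t * c"
  unfolding frag_eval_def sum_distrib_right by (simp add: mult.assoc)

lemma frag_eval_in_graded:
  assumes "graded gr" "\<And>p. p \<in> Poly_Mapping.keys t \<Longrightarrow> w p \<in> gr n"
  shows "frag_eval w t \<in> gr n"
  unfolding frag_eval_def
  by (rule sum_in_graded[OF assms(1)]) (auto intro: of_int_mult_in_graded[OF assms(1)] assms(2))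

lemma dg_frag_eval:
  assumes "dg_algebra gr d"
  shows "d (frag_eval w t) = frag_eval (\<lambda>p. d (w p)) t"
  unfolding frag_eval_def by (simp add: dg_sum[OF assms] dg_of_int_mult[OF assms])

section \<open>Representatives of tensors\<close>

lemma tens_dom_iff: "t \<in> tens_dom dA \<longleftrightarrow> (\<forall>p\<in>Poly_Mapping.keys t. dA (fst p) = 0)"
  unfolding tens_dom_def by force

lemma tens_dom_frag_of: "dA a = 0 \<Longrightarrow> frag_of (a, x) \<in> tens_dom dA"
  unfolding tens_dom_iff by simp

lemma tens_dom_cmul: "t \<in> tens_dom dA \<Longrightarrow> frag_cmul c t \<in> tens_dom dA"
  using keys_cmul[of c t] unfolding tens_dom_iff by blast

lemma tens_dom_diff: "t \<in> tens_dom dA \<Longrightarrow> s \<in> tens_dom dA \<Longrightarrow> t - s \<in> tens_dom dA"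
  using keys_diff[of t s] unfolding tens_dom_iff by blast

lemma tens_dom_sum: "(\<And>i. i \<in> S \<Longrightarrow> f i \<in> tens_dom dA) \<Longrightarrow> (\<Sum>i\<in>S. f i) \<in> tens_dom dA"
  using keys_sum[of f S] unfolding tens_dom_iff by blast

lemma tens_dom_extend:
  "(\<And>p. p \<in> Poly_Mapping.keys t \<Longrightarrow> f p \<in> tens_dom dA) \<Longrightarrow> frag_extend f t \<in> tens_dom dA"
  using keys_frag_extend[of f t] unfolding tens_dom_iff by blast

lemma tens_one_in_dom: "dg_algebra grA dA \<Longrightarrow> tens_one \<in> tens_dom dA"
  unfolding tens_one_def by (rule tens_dom_frag_of) (rule dg_one)

lemma tens_mult_in_dom:
  assumes "dg_algebra grA dA" "t \<in> tens_dom dA" "s \<in> tens_dom dA"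
  shows "tens_mult grK grA t s \<in> tens_dom dA"
  unfolding tens_mult_def
proof (rule tens_dom_extend, rule tens_dom_extend, rule tens_dom_sum, rule tens_dom_sum,
    rule tens_dom_cmul, rule tens_dom_frag_of)
  fix p q i j
  assume "p \<in> Poly_Mapping.keys t" "q \<in> Poly_Mapping.keys s"
  then have "dA (fst p) = 0" "dA (fst q) = 0" using assms(2,3) unfolding tens_dom_iff by auto
  then show "dA (fst p * comp grA j (fst q)) = 0"
    using cycle_mult[OF assms(1)] cycle_comp[OF assms(1)] by blast
qed

lemma tens_diff_in_dom:
  assumes "dg_algebra grA dA" "t \<in> tens_dom dA"
  shows "tens_diff grA dK t \<in> tens_dom dA"
  unfolding tens_diff_def
proof (rule tens_dom_extend, rule tens_dom_sum, rule tens_dom_cmul, rule tens_dom_frag_of)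
  fix p n
  assume "p \<in> Poly_Mapping.keys t"
  then have "dA (fst p) = 0" using assms(2) unfolding tens_dom_iff by auto
  then show "dA (comp grA n (fst p)) = 0" by (rule cycle_comp[OF assms(1)])
qed

lemma tens_rel_uminus: "t \<in> tens_rel dK dA phi \<Longrightarrow> - t \<in> tens_rel dK dA phi"
  using tens_rel.diff[OF tens_rel.zero] by fastforce

lemma tens_rel_add: "t \<in> tens_rel dK dA phi \<Longrightarrow> s \<in> tens_rel dK dA phi \<Longrightarrow> t + s \<in> tens_rel dK dA phi"
  using tens_rel.diff[OF _ tens_rel_uminus] by fastforce

lemma tens_rel_frag_of_zero:
  assumes "dA 0 = 0"
  shows "frag_of (0, x) \<in> tens_rel dK dA phi"
proof -
  have "frag_of (0 + 0, x) - frag_of (0, x) - frag_of (0, x) \<in> tens_rel dK dA phi"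
    by (rule tens_rel.add_left) (use assms in simp_all)
  then show ?thesis using tens_rel_uminus by fastforce
qed

section \<open>The multiplication map\<close>

locale dg_over =
  fixes grK :: "int \<Rightarrow> 'k::ring_1 set" and dK :: "'k \<Rightarrow> 'k"
    and grA :: "int \<Rightarrow> 'a::ring_1 set" and dA :: "'a \<Rightarrow> 'a"
    and phi :: "'k \<Rightarrow> 'a"
  assumes over: "dg_algebra_over grK dK grA dA phi"
begin

abbreviation rel where "rel \<equiv> tens_rel dK dA phi"

lemma dg_K: "dg_algebra grK dK" and dg_A: "dg_algebra grA dA"
  and phi_add: "phi (x + y) = phi x + phi y" and phi_mult: "phi (x * y) = phi x * phi y"
  and phi_one: "phi 1 = 1" and phi_degree: "x \<in> grK n \<Longrightarrow> phi x \<in> grA n"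
  and phi_centre: "phi x \<in> gr_centre grA" and phi_dg: "phi (dK x) = dA (phi x)"
  using over unfolding dg_algebra_over_def by blast+

lemma graded_K: "graded grK" and graded_A: "graded grA"
  using dg_graded[OF dg_K] dg_graded[OF dg_A] .

lemma phi_zero: "phi 0 = 0"
  using phi_add[of 0 0] by simp

lemma phi_sum: "phi (\<Sum>i\<in>S. f i) = (\<Sum>i\<in>S. phi (f i))"
  by (induction S rule: infinite_finite_induct) (auto simp: phi_add phi_zero)

lemma tens_alpha_one: "tens_alpha phi tens_one = 1"
  unfolding tens_one_def tens_alpha_eq_frag_eval by (simp add: phi_one)

lemma tens_alpha_rel: "t \<in> rel \<Longrightarrow> tens_alpha phi t = 0"
  unfolding tens_alpha_eq_frag_eval
  by (induction rule: tens_rel.induct)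
     (simp_all add: distrib_left distrib_right phi_add phi_mult mult.assoc)

lemma tens_rel_frag_of_diff_left:
  assumes "dA b = 0" "dA b' = 0"
  shows "frag_of (b, y) - frag_of (b - b', y) - frag_of (b', y) \<in> rel"
  using tens_rel.add_left[where a = "b - b'" and a' = b' and x = y] assms
  by (simp add: dg_diff[OF dg_A])

lemma tens_alpha_degree:
  assumes "t \<in> tens_gr grK grA dA n"
  shows "tens_alpha phi t \<in> grA n"
  unfolding tens_alpha_eq_frag_eval
proof (rule frag_eval_in_graded[OF graded_A])
  fix p assume "p \<in> Poly_Mapping.keys t"
  with assms obtain k where "fst p \<in> grA k" "snd p \<in> grK (n - k)"
    unfolding tens_gr_def by auto
  from graded_mult[OF graded_A this(1) phi_degree[OF this(2)]]
  show "fst p * phi (snd p) \<in> grA n" by simp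
qed

lemma tens_alpha_diff:
  assumes "t \<in> tens_dom dA"
  shows "tens_alpha phi (tens_diff grA dK t) = dA (tens_alpha phi t)"
proof -
  have "tens_alpha phi (tens_diff grA dK t) =
     frag_eval (\<lambda>p. \<Sum>n\<in>degs grA (fst p). gsign n * (comp grA n (fst p) * phi (dK (snd p)))) t"
    unfolding tens_alpha_eq_frag_eval tens_diff_def frag_eval_extend by simp
  also have "\<dots> = frag_eval (\<lambda>p. dA (fst p * phi (snd p))) t"
  proof (rule frag_eval_cong)
    fix p assume "p \<in> Poly_Mapping.keys t"
    then have "dA (fst p) = 0" using assms unfolding tens_dom_iff by auto
    then show "(\<Sum>n\<in>degs grA (fst p). gsign n * (comp grA n (fst p) * phi (dK (snd p))))
        = dA (fst p * phi (snd p))"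
      unfolding dg_mult_by_comp[OF dg_A] by (simp add: cycle_comp[OF dg_A] phi_dg)
  qed
  also have "\<dots> = dA (tens_alpha phi t)" by (simp add: tens_alpha_eq_frag_eval dg_frag_eval[OF dg_A])
  finally show ?thesis .
qed

text \<open>The sign in the product of the tensor algebra is exactly the one produced by moving the
  central element \<open>\<phi>(x\<^sub>i)\<close> past \<open>b\<^sub>j\<close>.\<close>

lemma sum_signed_products:
  "(\<Sum>i\<in>degs grK x. \<Sum>j\<in>degs grA b. gsign (i * j) * ((a * comp grA j b) * phi (comp grK i x * y)))
   = a * phi x * (b * phi y)"
proof -
  have summand: "gsign (i * j) * ((a * comp grA j b) * phi (comp grK i x * y))
         = (a * phi (comp grK i x)) * (comp grA j b * phi y)" for i j
  proof -
    have "gsign (i * j) * ((a * comp grA j b) * phi (comp grK i x * y))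
        = a * (gsign (i * j) * (comp grA j b * phi (comp grK i x))) * phi y"
      by (simp add: phi_mult mult.assoc gsign_commute)
    also have "gsign (i * j) * (comp grA j b * phi (comp grK i x)) = phi (comp grK i x) * comp grA j b"
      by (rule gr_centre_commute[OF graded_A phi_centre phi_degree[OF comp_in_graded[OF graded_K]]
            comp_in_graded[OF graded_A], symmetric])
    finally show ?thesis by (simp add: mult.assoc)
  qed
  have "(\<Sum>i\<in>degs grK x. \<Sum>j\<in>degs grA b. gsign (i * j) * ((a * comp grA j b) * phi (comp grK i x * y)))
      = (\<Sum>i\<in>degs grK x. a * phi (comp grK i x)) * (\<Sum>j\<in>degs grA b. comp grA j b * phi y)"
    by (simp add: summand sum_product)
  also have "\<dots> = (a * phi (\<Sum>i\<in>degs grK x. comp grK i x)) * ((\<Sum>j\<in>degs grA b. comp grA j b) * phi y)"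
    by (simp add: phi_sum sum_distrib_left sum_distrib_right)
  finally show ?thesis by (simp add: sum_comp[OF graded_K] sum_comp[OF graded_A])
qed

lemma tens_alpha_mult:
  "tens_alpha phi (tens_mult grK grA t s) = tens_alpha phi t * tens_alpha phi s"
proof -
  let ?g = "\<lambda>p. fst p * phi (snd p)"
  have "tens_alpha phi (tens_mult grK grA t s) = frag_eval (\<lambda>p. frag_eval (\<lambda>q. ?g p * ?g q) s) t"
    unfolding tens_alpha_eq_frag_eval tens_mult_def frag_eval_extend
    by (simp add: sum_signed_products)
  then show ?thesis by (simp add: frag_eval_mult_left frag_eval_mult_right tens_alpha_eq_frag_eval)
qed

end

section \<open>Bijectivity over an acyclic base\<close>

lemma contraction_split:
  assumes "dg_algebra gr d" "graded_commutative gr" "h \<in> gr (-1)" "d h = 1" "x \<in> gr m"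
  shows "x = d (h * x) + (gsign (m + 1) * d x) * h"
proof -
  have "d (h * x) = x - h * d x"
    using dg_Leibniz[OF assms(1,3), of x] by (simp add: assms(4))
  moreover have "h * d x = gsign ((-1) * (m + 1)) * (d x * h)"
    using assms(2,3) dg_degree[OF assms(1,5)] unfolding graded_commutative_def by blast
  then have "h * d x = gsign (m + 1) * (d x * h)"
    by (simp only: mult_minus1 gsign_uminus)
  ultimately show ?thesis by (simp add: mult.assoc)
qed

lemma cycle_eq_0_if_mult_cycle:
  assumes "dg_algebra gr d" "d e = 1" "d c = 0" "d (c * e) = 0"
  shows "c = 0"
proof -
  note G = dg_graded[OF assms(1)]
  have "d (c * e) = (\<Sum>n\<in>degs gr c. gsign n * comp gr n c)"
    unfolding dg_mult_by_comp[OF assms(1)] by (simp add: cycle_comp[OF assms(1,3)] assms(2))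
  then have "comp gr n (d (c * e)) = gsign n * comp gr n c" for n
    by (rule comp_eqI[OF G finite_degs[OF G], rotated 2])
       (auto simp: gsign_mult_in_graded[OF G comp_in_graded[OF G]] degs_def)
  then have "comp gr n c = 0" for n
    using assms(4) comp_zero[OF G] by (metis gsign_mult_cancel mult_zero_right)
  then show ?thesis using sum_comp[OF G, of c] by (simp add: degs_def)
qed

lemma sum_comp_contraction:
  assumes "dg_algebra gr d" "d e = 1"
  shows "(\<Sum>n\<in>degs gr a. gsign n * (d (comp gr n a * e) - d (comp gr n a) * e)) = a"
proof -
  note G = dg_graded[OF assms(1)]
  have "gsign n * (d (comp gr n a * e) - d (comp gr n a) * e) = comp gr n a" for n
    using dg_Leibniz[OF assms(1) comp_in_graded[OF G], of n a e] by (simp add: assms(2))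
  then show ?thesis by (simp add: sum_comp[OF G])
qed

locale acyclic_dg_over = dg_over +
  assumes graded_commutative_K: "graded_commutative grK" and acyclic_K: "acyclic dK"
begin

definition contraction where
  "contraction = (SOME h. h \<in> grK (-1) \<and> dK h = 1)"

lemma contraction_degree: "contraction \<in> grK (-1)" and dK_contraction: "dK contraction = 1"
  using someI_ex[OF acyclic_ex_contraction[OF dg_K acyclic_K]] unfolding contraction_def by auto

lemma dA_phi_contraction: "dA (phi contraction) = 1"
  by (simp add: phi_dg[symmetric] dK_contraction phi_one)

definition has_normal_form where
  "has_normal_form t \<longleftrightarrow>
     (\<exists>b c. dA b = 0 \<and> dA c = 0 \<and> t - (frag_of (b, 1) + frag_of (c, contraction)) \<in> rel)"

lemma has_normal_form_cong:
  assumes "has_normal_form t" "t' - t \<in> rel"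
  shows "has_normal_form t'"
proof -
  obtain b c where cycles: "dA b = 0" "dA c = 0"
    and t: "t - (frag_of (b, 1) + frag_of (c, contraction)) \<in> rel"
    using assms(1) unfolding has_normal_form_def by blast
  have "t' - (frag_of (b, 1) + frag_of (c, contraction)) \<in> rel"
    using tens_rel_add[OF assms(2) t] by (simp add: algebra_simps)
  with cycles show ?thesis unfolding has_normal_form_def by blast
qed

lemma has_normal_form_zero: "has_normal_form 0"
proof -
  have "frag_of (0, 1) + frag_of (0, contraction) \<in> rel"
    by (intro tens_rel_add tens_rel_frag_of_zero dg_zero[OF dg_A])
  then show ?thesis unfolding has_normal_form_def using dg_zero[OF dg_A] tens_rel_uminus by fastforce
qed

lemma has_normal_form_diff:
  assumes "has_normal_form t" "has_normal_form s"
  shows "has_normal_form (t - s)"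
proof -
  obtain b c b' c' where cycles: "dA b = 0" "dA c = 0" "dA b' = 0" "dA c' = 0"
    and t: "t - (frag_of (b, 1) + frag_of (c, contraction)) \<in> rel"
    and s: "s - (frag_of (b', 1) + frag_of (c', contraction)) \<in> rel"
    using assms unfolding has_normal_form_def by blast
  have "(t - s) - (frag_of (b - b', 1) + frag_of (c - c', contraction)) \<in> rel"
    using tens_rel_add[OF tens_rel.diff[OF t s] tens_rel_add[OF
          tens_rel_frag_of_diff_left[OF cycles(1,3), where y = 1]
          tens_rel_frag_of_diff_left[OF cycles(2,4), where y = contraction]]]
    by (simp add: algebra_simps)
  moreover have "dA (b - b') = 0" "dA (c - c') = 0" using cycles by (simp_all add: dg_diff[OF dg_A])
  ultimately show ?thesis unfolding has_normal_form_def by blast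
qed

lemma has_normal_form_add: "has_normal_form t \<Longrightarrow> has_normal_form s \<Longrightarrow> has_normal_form (t + s)"
  using has_normal_form_diff[of t "0 - s"] has_normal_form_diff[OF has_normal_form_zero] by simp

lemma has_normal_form_frag_of_homogeneous:
  assumes a: "dA a = 0" and x: "x \<in> grK m"
  shows "has_normal_form (frag_of (a, x))"
proof -
  define r where "r = dK (contraction * x)"
  define r' where "r' = gsign (m + 1) * dK x"
  have x_eq: "x = r + r' * contraction"
    unfolding r_def r'_def
    by (rule contraction_split[OF dg_K graded_commutative_K contraction_degree dK_contraction x])
  have cycles: "dK r = 0" "dK r' = 0"
    unfolding r_def r'_def by (simp_all add: dg_gsign_mult[OF dg_K] dg_dd[OF dg_K])
  then have "dA (a * phi r) = 0" "dA (a * phi r') = 0"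
    using cycle_mult[OF dg_A a] phi_dg phi_zero by metis+
  moreover have
    "(frag_of (a, r + r' * contraction) - frag_of (a, r) - frag_of (a, r' * contraction))
      - (frag_of (a * phi r, 1) - frag_of (a, r * 1))
      - (frag_of (a * phi r', contraction) - frag_of (a, r' * contraction)) \<in> rel"
    by (intro tens_rel.diff[OF tens_rel.diff[OF tens_rel.add_right tens_rel.balanced]
          tens_rel.balanced] a cycles)
  then have "frag_of (a, x) - (frag_of (a * phi r, 1) + frag_of (a * phi r', contraction)) \<in> rel"
    by (simp add: x_eq algebra_simps)
  ultimately show ?thesis unfolding has_normal_form_def by blast
qed

lemma has_normal_form_frag_of:
  assumes a: "dA a = 0"
  shows "has_normal_form (frag_of (a, x))"
proof -
  have zero: "has_normal_form (frag_of (a, 0))"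
  proof (rule has_normal_form_cong[OF has_normal_form_zero])
    have "frag_of (a, 0 + 0) - frag_of (a, 0) - frag_of (a, 0) \<in> rel"
      by (rule tens_rel.add_right) (rule a)
    then show "frag_of (a, 0) - 0 \<in> rel" using tens_rel_uminus by fastforce
  qed
  have add: "has_normal_form (frag_of (a, y + y'))"
    if "has_normal_form (frag_of (a, y))" "has_normal_form (frag_of (a, y'))" for y y'
  proof (rule has_normal_form_cong[OF has_normal_form_add[OF that]])
    have "frag_of (a, y + y') - frag_of (a, y) - frag_of (a, y') \<in> rel"
      by (rule tens_rel.add_right) (rule a)
    then show "frag_of (a, y + y') - (frag_of (a, y) + frag_of (a, y')) \<in> rel"
      by (simp only: diff_diff_eq)
  qed
  have "has_normal_form (frag_of (a, \<Sum>n\<in>S. comp grK n x))" if "finite S" for S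
    using that
    by (induction S rule: finite_induct)
       (simp_all add: zero add has_normal_form_frag_of_homogeneous[OF a comp_in_graded[OF graded_K]])
  from this[OF finite_degs[OF graded_K, of x]] show ?thesis by (simp only: sum_comp[OF graded_K])
qed

lemma has_normal_form:
  assumes "t \<in> tens_dom dA"
  shows "has_normal_form t"
proof -
  have "Poly_Mapping.keys t \<subseteq> {p. dA (fst p) = 0}" using assms unfolding tens_dom_iff by blast
  then show ?thesis
  proof (induction t rule: frag_induction)
    case zero
    then show ?case by (rule has_normal_form_zero)
  next
    case (one p)
    then show ?case using has_normal_form_frag_of[of "fst p" "snd p"] by simp
  next
    case (diff t s)
    then show ?case by (rule has_normal_form_diff)
  qed
qed

lemma tens_alpha_injective:
  assumes "t \<in> tens_dom dA" "tens_alpha phi t = 0"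
  shows "t \<in> rel"
proof -
  obtain b c where cycles: "dA b = 0" "dA c = 0"
    and t: "t - (frag_of (b, 1) + frag_of (c, contraction)) \<in> rel"
    using has_normal_form[OF assms(1)] unfolding has_normal_form_def by blast
  have "b + c * phi contraction = 0"
    using tens_alpha_rel[OF t] assms(2) by (simp add: tens_alpha_eq_frag_eval phi_one)
  then have c_e: "c * phi contraction = - b" by (metis add.commute eq_neg_iff_add_eq_0)
  then have "c = 0"
    using cycle_eq_0_if_mult_cycle[OF dg_A dA_phi_contraction cycles(2)]
    by (simp add: dg_uminus[OF dg_A] cycles(1))
  with c_e have "b = 0" by simp
  have "frag_of (b, 1) + frag_of (c, contraction) \<in> rel"
    unfolding \<open>b = 0\<close> \<open>c = 0\<close> by (intro tens_rel_add tens_rel_frag_of_zero dg_zero[OF dg_A])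
  from tens_rel_add[OF t this] show ?thesis by simp
qed

lemma tens_alpha_surjective: "\<exists>t\<in>tens_dom dA. tens_alpha phi t = a"
proof
  let ?t = "\<Sum>n\<in>degs grA a. frag_cmul (gsign n)
      (frag_of (dA (comp grA n a * phi contraction), 1) - frag_of (dA (comp grA n a), contraction))"
  show "?t \<in> tens_dom dA"
    by (intro tens_dom_sum tens_dom_cmul tens_dom_diff tens_dom_frag_of dg_dd[OF dg_A])
  show "tens_alpha phi ?t = a"
    by (simp add: tens_alpha_eq_frag_eval phi_one sum_comp_contraction[OF dg_A dA_phi_contraction])
qed

end

theorem lemma4p5:
  fixes grK :: "int \<Rightarrow> 'k::ring_1 set" and dK :: "'k \<Rightarrow> 'k"
    and grA :: "int \<Rightarrow> 'a::ring_1 set" and dA :: "'a \<Rightarrow> 'a"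
    and phi :: "'k \<Rightarrow> 'a"
  assumes "dg_algebra grK dK" and "graded_commutative grK" and "acyclic dK"
    and "dg_algebra_over grK dK grA dA phi"
  shows "\<comment> \<open>the tensor operations are well defined on representatives\<close>
         (\<forall>t\<in>tens_dom dA. \<forall>s\<in>tens_dom dA. tens_mult grK grA t s \<in> tens_dom dA) \<and>
         (\<forall>t\<in>tens_dom dA. tens_diff grA dK t \<in> tens_dom dA) \<and>
         tens_one \<in> tens_dom dA \<and>
         \<comment> \<open>alpha is well defined on the quotient\<close>
         (\<forall>t\<in>tens_rel dK dA phi. tens_alpha phi t = 0) \<and>
         \<comment> \<open>alpha is injective on the quotient\<close>
         (\<forall>t\<in>tens_dom dA. tens_alpha phi t = 0 \<longrightarrow> t \<in> tens_rel dK dA phi) \<and>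
         \<comment> \<open>alpha is surjective\<close>
         (\<forall>a. \<exists>t\<in>tens_dom dA. tens_alpha phi t = a) \<and>
         \<comment> \<open>alpha is a unital ring homomorphism\<close>
         tens_alpha phi tens_one = 1 \<and>
         (\<forall>t\<in>tens_dom dA. \<forall>s\<in>tens_dom dA.
            tens_alpha phi (tens_mult grK grA t s) = tens_alpha phi t * tens_alpha phi s) \<and>
         \<comment> \<open>alpha commutes with the differentials\<close>
         (\<forall>t\<in>tens_dom dA. tens_alpha phi (tens_diff grA dK t) = dA (tens_alpha phi t)) \<and>
         \<comment> \<open>alpha has degree 0\<close>
         (\<forall>n. \<forall>t\<in>tens_gr grK grA dA n. tens_alpha phi t \<in> grA n)"
proof -
  interpret acyclic_dg_over grK dK grA dA phi
    using assms(2-4) by unfold_locales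
  show ?thesis
    using tens_mult_in_dom[OF dg_A] tens_diff_in_dom[OF dg_A] tens_one_in_dom[OF dg_A]
      tens_alpha_rel tens_alpha_injective tens_alpha_surjective tens_alpha_one
      tens_alpha_mult tens_alpha_diff tens_alpha_degree
    by blast
qed

end
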